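(* Let $A$ be a commutative algebra over a field $K$ with multiplication $\star$ satisfying the Tortken identity $(a\star b)\star(c\star d)-(a\star d)\star(c\star b)=(a,b,c)\star d-(a,d,c)\star b$. Then for all $a,b,c,x,y\in A$: (i) $(a,y,b)\star(x\star c)+(b,y,c)\star(x\star a)+(c,y,a)\star(x\star b)-(a\star y)\star(b,x,c)-(b\star y)\star(c,x,a)-(c\star y)\star(a,x,b)=0$; (ii) if $\operatorname{char}K\neq3$: $((x\star a)\star(y\star b)-(x\star b)\star(y\star a))\star c+((x\star b)\star(y\star c)-(x\star c)\star(y\star b))\star a+((x\star c)\star(y\star a)-(x\star a)\star(y\star c))\star b=0$; (iii) $(x,y\star a,b)\star c+(x,y\star b,c)\star a+(x,y\star c,a)\star b-(x,y\star b,a)\star c-(x,y\star c,b)\star a-(x,y\star a,c)\star b=0$; (iv) $(((x\star a)\star b)\star c)\star y+(((x\star b)\star c)\star a)\star y+(((x\star c)\star a)\star b)\star y-(((x\star b)\star a)\star c)\star y-(((x\star c)\star b)\star a)\star y-(((x\star a)\star c)\star b)\star y=0$.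
   Context: The associator is $(a,b,c)=a\star(b\star c)-(a\star b)\star c$. *)

theory Defs
  imports Main "HOL.Vector_Spaces"
begin

definition comm_algebra ::
  "('k::field \<Rightarrow> 'a::ab_group_add \<Rightarrow> 'a) \<Rightarrow> ('a \<Rightarrow> 'a \<Rightarrow> 'a) \<Rightarrow> bool" where
  "comm_algebra scale mult \<longleftrightarrow>
     vector_space scale \<and>
     (\<forall>a b c. mult (a + b) c = mult a c + mult b c) \<and>
     (\<forall>a b c. mult a (b + c) = mult a b + mult a c) \<and>
     (\<forall>r a b. mult (scale r a) b = scale r (mult a b)) \<and>
     (\<forall>r a b. mult a (scale r b) = scale r (mult a b)) \<and>
     (\<forall>a b. mult a b = mult b a)"

definition assoc :: "('a::ab_group_add \<Rightarrow> 'a \<Rightarrow> 'a) \<Rightarrow> 'a \<Rightarrow> 'a \<Rightarrow> 'a \<Rightarrow> 'a" where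
  "assoc mult a b c = mult a (mult b c) - mult (mult a b) c"

definition tortken :: "('a::ab_group_add \<Rightarrow> 'a \<Rightarrow> 'a) \<Rightarrow> bool" where
  "tortken mult \<longleftrightarrow> (\<forall>a b c d.
     mult (mult a b) (mult c d) - mult (mult a d) (mult c b)
       = mult (assoc mult a b c) d - mult (assoc mult a d c) b)"

end

(*
  Every identity is a linear consequence of instances of the Tortken identity
  (multiplied by elements of the algebra), so only biadditivity and commutativity
  of the product are needed.  The certificate for each
  identity is the explicit combination of Tortken defects it equals.  Identity (i)
  is the basic one; (ii) and (iii) are (i) plus a few further Tortken instances,
  except that for (ii) this only expresses three times the cyclic sum, which is
  why characteristic 3 has to be excluded.
*)

theory Submission
  imports Defs
begin

locale tortken_ring =
  fixes mult :: "'a::ab_group_add \<Rightarrow> 'a \<Rightarrow> 'a" (infixl "\<star>" 70)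
  assumes mult_add_left: "(a + b) \<star> c = a \<star> c + b \<star> c"
    and mult_commute: "a \<star> b = b \<star> a"
    and tortken: "tortken mult"
begin

lemma mult_add_right: "a \<star> (b + c) = a \<star> b + a \<star> c"
  by (metis mult_commute mult_add_left)

lemma mult_diff_left: "(a - b) \<star> c = a \<star> c - b \<star> c"
  by (metis eq_diff_eq mult_add_left)

lemma mult_diff_right: "a \<star> (b - c) = a \<star> b - a \<star> c"
  by (metis mult_commute mult_diff_left)

lemma mult_zero_left: "0 \<star> a = 0"
  using mult_diff_left[of 0 0 a] by simp

lemma mult_zero_right: "a \<star> 0 = 0"
  by (metis mult_commute mult_zero_left)

lemma mult_minus_left: "(- a) \<star> b = - (a \<star> b)"
  by (metis diff_0 mult_diff_left mult_zero_left)

lemma mult_minus_right: "a \<star> (- b) = - (a \<star> b)"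
  by (metis mult_commute mult_minus_left)

lemmas mult_distribs = mult_add_left mult_add_right mult_diff_left mult_diff_right
  mult_minus_left mult_minus_right mult_zero_left mult_zero_right

definition tortken_defect :: "'a \<Rightarrow> 'a \<Rightarrow> 'a \<Rightarrow> 'a \<Rightarrow> 'a" where
  "tortken_defect a b c d =
     (a \<star> b) \<star> (c \<star> d) - (a \<star> d) \<star> (c \<star> b) - (assoc (\<star>) a b c \<star> d - assoc (\<star>) a d c \<star> b)"

lemma tortken_defect_eq_0: "tortken_defect a b c d = 0"
  using tortken unfolding tortken_def tortken_defect_def by simp

lemma cyclic_assoc_identity:
  "assoc (\<star>) a y b \<star> (x \<star> c) + assoc (\<star>) b y c \<star> (x \<star> a) + assoc (\<star>) c y a \<star> (x \<star> b)
   - (a \<star> y) \<star> assoc (\<star>) b x c - (b \<star> y) \<star> assoc (\<star>) c x a - (c \<star> y) \<star> assoc (\<star>) a x b = 0"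
  (is "?lhs = 0")
proof -
  have "?lhs = (tortken_defect a c b x - tortken_defect a b c x + tortken_defect b a c x) \<star> y
      + tortken_defect b (a \<star> x) c y - tortken_defect a (b \<star> x) c y + tortken_defect a (c \<star> x) b y"
    by (simp add: tortken_defect_def assoc_def mult_distribs mult_commute algebra_simps)
  then show ?thesis
    by (simp add: tortken_defect_eq_0 mult_zero_left)
qed

lemma cyclic_commutator_identity:
  assumes no_3_torsion: "\<And>v :: 'a. v + v + v = 0 \<Longrightarrow> v = 0"
  shows "((x \<star> a) \<star> (y \<star> b) - (x \<star> b) \<star> (y \<star> a)) \<star> c
    + ((x \<star> b) \<star> (y \<star> c) - (x \<star> c) \<star> (y \<star> b)) \<star> a
    + ((x \<star> c) \<star> (y \<star> a) - (x \<star> a) \<star> (y \<star> c)) \<star> b = 0"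
    (is "?E = 0")
proof (rule no_3_torsion)
  have "?E + ?E + ?E =
      (assoc (\<star>) a y b \<star> (x \<star> c) + assoc (\<star>) b y c \<star> (x \<star> a) + assoc (\<star>) c y a \<star> (x \<star> b)
        - (a \<star> y) \<star> assoc (\<star>) b x c - (b \<star> y) \<star> assoc (\<star>) c x a - (c \<star> y) \<star> assoc (\<star>) a x b)
      + tortken_defect (a \<star> y) b x c - tortken_defect (a \<star> x) b y c
      + tortken_defect (b \<star> x) a y c - tortken_defect (b \<star> y) a x c
      + tortken_defect (c \<star> y) a x b - tortken_defect (c \<star> x) a y b
      + tortken_defect a x b y \<star> c + tortken_defect b x c y \<star> a - tortken_defect a x c y \<star> b"
    by (simp add: tortken_defect_def assoc_def mult_distribs mult_commute algebra_simps)
  then show "?E + ?E + ?E = 0"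
    by (simp add: cyclic_assoc_identity tortken_defect_eq_0 mult_zero_left)
qed

lemma alternating_assoc_identity:
  "assoc (\<star>) x (y \<star> a) b \<star> c + assoc (\<star>) x (y \<star> b) c \<star> a + assoc (\<star>) x (y \<star> c) a \<star> b
   - assoc (\<star>) x (y \<star> b) a \<star> c - assoc (\<star>) x (y \<star> c) b \<star> a - assoc (\<star>) x (y \<star> a) c \<star> b = 0"
  (is "?lhs = 0")
proof -
  have "?lhs =
      (assoc (\<star>) a y b \<star> (x \<star> c) + assoc (\<star>) b y c \<star> (x \<star> a) + assoc (\<star>) c y a \<star> (x \<star> b)
        - (a \<star> y) \<star> assoc (\<star>) b x c - (b \<star> y) \<star> assoc (\<star>) c x a - (c \<star> y) \<star> assoc (\<star>) a x b)
      + tortken_defect b a x (c \<star> y) - tortken_defect a b x (c \<star> y) - tortken_defect c a x (b \<star> y)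
      + tortken_defect b (a \<star> y) x c - tortken_defect a (b \<star> y) x c - tortken_defect c (a \<star> y) x b"
    by (simp add: tortken_defect_def assoc_def mult_distribs mult_commute algebra_simps)
  then show ?thesis
    by (simp add: cyclic_assoc_identity tortken_defect_eq_0)
qed

lemma alternating_right_mult_identity:
  "(((x \<star> a) \<star> b) \<star> c) \<star> y + (((x \<star> b) \<star> c) \<star> a) \<star> y + (((x \<star> c) \<star> a) \<star> b) \<star> y
   - (((x \<star> b) \<star> a) \<star> c) \<star> y - (((x \<star> c) \<star> b) \<star> a) \<star> y - (((x \<star> a) \<star> c) \<star> b) \<star> y = 0"
  (is "?lhs = 0")
proof -
  have "?lhs = (tortken_defect b c a x - tortken_defect c b a x - tortken_defect c x b a) \<star> y"
    by (simp add: tortken_defect_def assoc_def mult_distribs mult_commute algebra_simps)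
  then show ?thesis
    by (simp add: tortken_defect_eq_0 mult_zero_left)
qed

end

lemma comm_algebra_imp_tortken_ring:
  "comm_algebra scale mult \<Longrightarrow> tortken mult \<Longrightarrow> tortken_ring mult"
  by (simp add: comm_algebra_def tortken_ring_def)

lemma (in vector_space) triple_eq_0_imp_eq_0:
  fixes v :: 'b
  assumes "(3 :: 'a) \<noteq> 0" and "v + v + v = 0"
  shows "v = 0"
proof -
  have "scale 3 v = scale (1 + 1 + 1) v"
    by simp
  also have "\<dots> = v + v + v"
    by (simp only: scale_left_distrib scale_one)
  finally show ?thesis
    using assms by simp
qed

theorem mainTheorem19:
  fixes scale :: "'k::field \<Rightarrow> 'a::ab_group_add \<Rightarrow> 'a"
    and mult :: "'a \<Rightarrow> 'a \<Rightarrow> 'a" (infixl "\<star>" 70)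
  assumes alg: "comm_algebra scale mult"
    and tk: "tortken mult"
  shows
   "(\<forall>a b c x y.
      assoc (\<star>) a y b \<star> (x \<star> c) + assoc (\<star>) b y c \<star> (x \<star> a) + assoc (\<star>) c y a \<star> (x \<star> b)
      - (a \<star> y) \<star> assoc (\<star>) b x c - (b \<star> y) \<star> assoc (\<star>) c x a - (c \<star> y) \<star> assoc (\<star>) a x b = 0)
   \<and>
   ((3::'k) \<noteq> 0 \<longrightarrow> (\<forall>a b c x y.
      ((x \<star> a) \<star> (y \<star> b) - (x \<star> b) \<star> (y \<star> a)) \<star> c
      + ((x \<star> b) \<star> (y \<star> c) - (x \<star> c) \<star> (y \<star> b)) \<star> a
      + ((x \<star> c) \<star> (y \<star> a) - (x \<star> a) \<star> (y \<star> c)) \<star> b = 0))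
   \<and>
   (\<forall>a b c x y.
      assoc (\<star>) x (y \<star> a) b \<star> c + assoc (\<star>) x (y \<star> b) c \<star> a + assoc (\<star>) x (y \<star> c) a \<star> b
      - assoc (\<star>) x (y \<star> b) a \<star> c - assoc (\<star>) x (y \<star> c) b \<star> a - assoc (\<star>) x (y \<star> a) c \<star> b = 0)
   \<and>
   (\<forall>a b c x y.
      (((x \<star> a) \<star> b) \<star> c) \<star> y + (((x \<star> b) \<star> c) \<star> a) \<star> y + (((x \<star> c) \<star> a) \<star> b) \<star> y
      - (((x \<star> b) \<star> a) \<star> c) \<star> y - (((x \<star> c) \<star> b) \<star> a) \<star> y - (((x \<star> a) \<star> c) \<star> b) \<star> y = 0)"
proof -
  interpret tortken_ring mult
    using comm_algebra_imp_tortken_ring[OF alg tk] .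
  have vs: "vector_space scale"
    using alg unfolding comm_algebra_def by blast
  show ?thesis
  proof (intro conjI impI allI cyclic_assoc_identity cyclic_commutator_identity
      alternating_assoc_identity alternating_right_mult_identity)
    show "v = 0" if "(3 :: 'k) \<noteq> 0" and "v + v + v = 0" for v :: 'a
      using vs that by (rule vector_space.triple_eq_0_imp_eq_0)
  qed
qed

end
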